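(* Let $\delta<\mathfrak t$ be an ordinal and assume: (i) $\bar A=\langle A_i:i<\delta\rangle$ is a sequence of members of $[\omega]^{\aleph_0}$; (ii) $\langle B_n:n<\omega\rangle\subseteq[\omega]^{\aleph_0}$ is $\subseteq^*$-decreasing (i.e. $B_m\subseteq^*B_n$ for $n<m$); (iii) $A_i\cap B_n$ is infinite for every $i<\delta$ and $n<\omega$; (iv) for all $i<j<\delta$ there is $n<\omega$ with $A_j\cap B_n\subseteq^* A_i\cap B_n$. Then there is $A\in[\omega]^{\aleph_0}$ such that $A\subseteq^* A_i$ for all $i<\delta$ and $A\subseteq^* B_n$ for all $n<\omega$.
   Context: $[\omega]^{\aleph_0}$ is the set of infinite subsets of $\omega$; $A\subseteq^* B$ means $A\setminus B$ is finite. $\mathfrak t$ is the least $\kappa$ such that there is a sequence $\langle X_\alpha:\alpha<\kappa\rangle\subseteq[\omega]^{\aleph_0}$ with $X_\beta\subseteq^* X_\alpha$ for $\alpha<\beta<\kappa$ and no $X\in[\omega]^{\aleph_0}$ satisfying $X\subseteq^*X_\alpha$ for all $\alpha$. *)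

theory Defs
  imports Main
begin

definition almost_sub :: "nat set \<Rightarrow> nat set \<Rightarrow> bool" (infix "\<subseteq>\<^sup>*" 50) where
  "A \<subseteq>\<^sup>* B \<longleftrightarrow> finite (A - B)"

text \<open>An ordinal is represented by a well-order s (its order type). A tower of
  length s: members of [omega]^aleph0 indexed by Field s, decreasing mod finite,
  with no infinite pseudo-intersection.\<close>
definition unbounded_tower :: "'k rel \<Rightarrow> ('k \<Rightarrow> nat set) \<Rightarrow> bool" where
  "unbounded_tower s X \<longleftrightarrow>
     (\<forall>\<alpha>\<in>Field s. infinite (X \<alpha>)) \<and>
     (\<forall>\<alpha> \<beta>. (\<alpha>, \<beta>) \<in> s \<and> \<alpha> \<noteq> \<beta> \<longrightarrow> X \<beta> \<subseteq>\<^sup>* X \<alpha>) \<and>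
     \<not> (\<exists>Y. infinite Y \<and> (\<forall>\<alpha>\<in>Field s. Y \<subseteq>\<^sup>* X \<alpha>))"

text \<open>The ordinal (well-order) r is below the tower number t: r is strictly shorter
  than every ordinal carrying an unbounded tower. Since t \<le> continuum, every
  candidate ordinal for the least one has a representative on the type nat set.\<close>
definition below_t :: "'i rel \<Rightarrow> bool" where
  "below_t r \<longleftrightarrow> (\<forall>(s :: nat set rel) X. Well_order s \<and> unbounded_tower s X \<longrightarrow> (r, s) \<in> ordLess)"

end

theory Submission
  imports Defs "HOL-Library.Infinite_Set"
begin

(* Put B'_n = B_0 \<inter> ... \<inter> B_n and, for each i, choose h_i(y) \<in> A_i \<inter> B'_y with h_i(y) \<ge> y.
   Fewer than t conditions of the form "only finitely many y \<in> Y have h_i(y) \<ge> next_Y(y)"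
   can be met by a single infinite Y: build a tower of such sets by transfinite recursion
   along \<delta>, taking at each stage a sparse subset of a pseudo-intersection of the earlier
   stages. For such a Y the staircase C = \<Union>_{y \<in> Y} B'_y \<inter> [y, next_Y(y)) is almost
   contained in every B_n and meets every A_i in an infinite set, and by (iv) the sets
   A_i \<inter> C are \<subseteq>*-decreasing. A pseudo-intersection of this tower of length \<delta> < t
   is the required A. *)

lemma subset_imp_almost_sub: "A \<subseteq> B \<Longrightarrow> A \<subseteq>\<^sup>* B"
  unfolding almost_sub_def by (metis Diff_eq_empty_iff finite.emptyI)

lemma almost_sub_trans: "A \<subseteq>\<^sup>* B \<Longrightarrow> B \<subseteq>\<^sup>* C \<Longrightarrow> A \<subseteq>\<^sup>* C"
  unfolding almost_sub_def by (rule finite_subset[of _ "(A - B) \<union> (B - C)"]) auto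

lemma almost_sub_Int_iff: "X \<subseteq>\<^sup>* A \<inter> B \<longleftrightarrow> X \<subseteq>\<^sup>* A \<and> X \<subseteq>\<^sup>* B"
  unfolding almost_sub_def by (simp add: Diff_Int)

lemma almost_sub_Int_transfer:
  assumes "\<exists>n. A \<inter> B n \<subseteq>\<^sup>* A' \<inter> B n" and "\<forall>n. C \<subseteq>\<^sup>* B n"
  shows "A \<inter> C \<subseteq>\<^sup>* A' \<inter> C"
proof -
  obtain n where n: "A \<inter> B n \<subseteq>\<^sup>* A' \<inter> B n" using assms(1) by blast
  have "A \<inter> C - A' \<inter> C \<subseteq> (A \<inter> B n - A' \<inter> B n) \<union> (C - B n)" by blast
  then show ?thesis using n assms(2) unfolding almost_sub_def by (meson finite_Un finite_subset)
qed

lemma compat_inj_on_inflationary: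
  assumes W: "Well_order r" and comp: "compat r r f" and inj: "inj_on f (Field r)"
    and into: "f ` Field r \<subseteq> Field r" and a: "a \<in> Field r"
  shows "(a, f a) \<in> r"
proof (rule ccontr)
  (* A least counterexample b has f b < b, hence f (f b) < f b: f b is a smaller one. *)
  interpret wo_rel r using W by (simp add: wo_rel_def)
  assume "(a, f a) \<notin> r"
  then have "a \<in> {c \<in> Field r. (c, f c) \<notin> r}" using a by simp
  then obtain b where b: "b \<in> {c \<in> Field r. (c, f c) \<notin> r}"
    and least: "\<And>c. (c, b) \<in> r - Id \<Longrightarrow> c \<notin> {c \<in> Field r. (c, f c) \<notin> r}"
    by (rule wfE_min[OF WF]) blast
  have fb: "f b \<in> Field r" using b into by blast
  have "(f b, b) \<in> r" "f b \<noteq> b"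
    using b fb TOTALS REFL by (auto simp: refl_on_def)
  then have "(f (f b), f b) \<in> r" "f (f b) \<noteq> f b"
    using comp inj fb b by (auto simp: compat_def dest: inj_onD)
  then have "(f b, f (f b)) \<notin> r" using ANTISYM by (auto simp: antisym_def)
  then show False using least[of "f b"] \<open>(f b, b) \<in> r\<close> \<open>f b \<noteq> b\<close> fb by auto
qed

lemma Restr_ordLeq:
  assumes W: "Well_order r"
  shows "(Restr r A, r) \<in> ordLeq"
proof (rule ccontr)
  let ?R = "Restr r A"
  have WR: "Well_order ?R" using W by (rule Well_order_Restr)
  assume "(?R, r) \<notin> ordLeq"
  then obtain f where "embedS r ?R f"
    using not_ordLeq_iff_ordLess[OF W WR] unfolding ordLess_def by blast
  then have emb: "embed r ?R f" and not_onto: "\<not> bij_betw f (Field r) (Field ?R)"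
    by (auto simp: embedS_def)
  have comp: "compat r ?R f" and inj: "inj_on f (Field r)"
    and ofil: "wo_rel.ofilter ?R (f ` Field r)"
    using embed_iff_compat_inj_on_ofilter[OF W WR] emb by auto
  have img: "f ` Field r \<subseteq> Field ?R"
    using ofil WR by (simp add: wo_rel.ofilter_def wo_rel_def)
  have FR: "Field ?R \<subseteq> Field r \<inter> A" by (auto simp: Field_def)
  obtain c where c: "c \<in> Field ?R" "c \<notin> f ` Field r"
    using not_onto inj img by (auto simp: bij_betw_def)
  have "compat r r f" using comp by (auto simp: compat_def)
  then have "(c, f c) \<in> r"
    using compat_inj_on_inflationary[OF W _ inj] img FR c by blast
  then have "c \<in> under ?R (f c)"
    using img FR c by (auto simp: under_def)
  moreover have "\<forall>a\<in>Field r. under ?R (f a) \<subseteq> f ` Field r"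
    using ofil WR by (simp add: wo_rel.ofilter_def wo_rel_def)
  then have "under ?R (f c) \<subseteq> f ` Field r" using c FR by blast
  ultimately show False using c by blast
qed

lemma below_t_ordLeq: "below_t r \<Longrightarrow> (r', r) \<in> ordLeq \<Longrightarrow> below_t r'"
  unfolding below_t_def using ordLeq_ordLess_trans by blast

lemma below_t_not_unbounded_tower:
  fixes s :: "nat set rel"
  shows "below_t r \<Longrightarrow> Well_order s \<Longrightarrow> (s, r) \<in> ordLeq \<Longrightarrow> \<not> unbounded_tower s X"
  unfolding below_t_def using not_ordLess_ordLeq by blast

lemma first_occurrence:
  assumes "Well_order r" and "\<alpha> \<in> Field r"
  obtains z where "z \<in> Field r" "X z = X \<alpha>"
    "\<And>\<beta>. (\<beta>, z) \<in> r \<Longrightarrow> \<beta> \<noteq> z \<Longrightarrow> X \<beta> \<noteq> X z"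
proof -
  interpret wo_rel r using assms(1) by (simp add: wo_rel_def)
  have "\<alpha> \<in> {\<gamma> \<in> Field r. X \<gamma> = X \<alpha>}" using assms(2) by simp
  then obtain z where z: "z \<in> {\<gamma> \<in> Field r. X \<gamma> = X \<alpha>}"
    and min: "\<And>\<beta>. (\<beta>, z) \<in> r - Id \<Longrightarrow> \<beta> \<notin> {\<gamma> \<in> Field r. X \<gamma> = X \<alpha>}"
    by (rule wfE_min[OF WF]) blast
  show ?thesis
  proof (rule that)
    show "z \<in> Field r" "X z = X \<alpha>" using z by simp_all
    fix \<beta> assume "(\<beta>, z) \<in> r" "\<beta> \<noteq> z"
    then show "X \<beta> \<noteq> X z" using min[of \<beta>] z by (auto intro: FieldI1)
  qed
qed

text \<open>A tower may repeat sets. Keeping only the first occurrence of each set makes it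
  injective, so that it can be transported to a well-order on \<^typ>\<open>nat set\<close>.\<close>

lemma below_t_pseudo_intersection:
  fixes X :: "'i \<Rightarrow> nat set"
  assumes W: "Well_order r" and bt: "below_t r"
    and inf: "\<forall>\<alpha>\<in>Field r. infinite (X \<alpha>)"
    and dec: "\<forall>\<alpha> \<beta>. (\<alpha>, \<beta>) \<in> r \<and> \<alpha> \<noteq> \<beta> \<longrightarrow> X \<beta> \<subseteq>\<^sup>* X \<alpha>"
  shows "\<exists>Y. infinite Y \<and> (\<forall>\<alpha>\<in>Field r. Y \<subseteq>\<^sup>* X \<alpha>)"
proof -
  interpret wo_rel r using W by (simp add: wo_rel_def)
  define I where "I = {\<alpha>\<in>Field r. \<forall>\<beta>. (\<beta>, \<alpha>) \<in> r \<and> \<beta> \<noteq> \<alpha> \<longrightarrow> X \<beta> \<noteq> X \<alpha>}"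
  define s where "s = dir_image (Restr r I) X"
  have "I \<subseteq> Field r" unfolding I_def by blast
  have FI: "Field (Restr r I) = I"
    by (rule Refl_Field_Restr2[OF REFL]) (auto simp: I_def)
  have "inj_on X I"
  proof (rule inj_onI)
    fix x y assume "x \<in> I" "y \<in> I" "X x = X y"
    then show "x = y" using TOTALS unfolding I_def by blast
  qed
  then have inj: "inj_on X (Field (Restr r I))" using FI by simp
  have Ws: "Well_order s"
    unfolding s_def using Well_order_dir_image[OF Well_order_Restr[OF W] inj] .
  have "(s, Restr r I) \<in> ordIso"
    unfolding s_def by (rule ordIso_symmetric[OF dir_image_ordIso[OF Well_order_Restr[OF W] inj]])
  then have "(s, r) \<in> ordLeq" using Restr_ordLeq[OF W] ordIso_ordLeq_trans by blast
  then have "\<not> unbounded_tower s id"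
    using below_t_not_unbounded_tower[OF bt Ws] by blast
  moreover have Fs: "Field s = X ` I" unfolding s_def dir_image_Field FI ..
  moreover have "\<forall>u v. (u, v) \<in> s \<and> u \<noteq> v \<longrightarrow> v \<subseteq>\<^sup>* u"
    unfolding s_def dir_image_def using dec by auto
  ultimately obtain Y where Y: "infinite Y" "\<forall>\<alpha>\<in>I. Y \<subseteq>\<^sup>* X \<alpha>"
    using inf \<open>I \<subseteq> Field r\<close> unfolding unbounded_tower_def by auto
  have "Y \<subseteq>\<^sup>* X \<alpha>" if \<alpha>: "\<alpha> \<in> Field r" for \<alpha>
  proof -
    obtain z where "z \<in> Field r" "X z = X \<alpha>" "\<And>\<beta>. (\<beta>, z) \<in> r \<Longrightarrow> \<beta> \<noteq> z \<Longrightarrow> X \<beta> \<noteq> X z"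
      using first_occurrence[OF W \<alpha>] by metis
    then show ?thesis using Y(2) unfolding I_def by auto
  qed
  then show ?thesis using Y(1) by blast
qed

lemma below_t_underS_pseudo_intersection:
  fixes T :: "'i \<Rightarrow> nat set"
  assumes W: "Well_order r" and bt: "below_t r"
    and inf: "\<forall>i\<in>underS r j. infinite (T i)"
    and dec: "\<forall>i\<in>underS r j. \<forall>k\<in>underS r i. T i \<subseteq>\<^sup>* T k"
  shows "\<exists>P. infinite P \<and> (\<forall>i\<in>underS r j. P \<subseteq>\<^sup>* T i)"
proof -
  let ?R = "Restr r (underS r j)"
  have bt_R: "below_t ?R" using bt Restr_ordLeq[OF W] by (rule below_t_ordLeq)
  have FR: "Field ?R = underS r j"
    using Field_Restr_ofilter[OF W wo_rel.underS_ofilter] W by (simp add: wo_rel_def)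
  have inf_R: "\<forall>\<alpha>\<in>Field ?R. infinite (T \<alpha>)" using inf FR by simp
  have dec_R: "\<forall>\<alpha> \<beta>. (\<alpha>, \<beta>) \<in> ?R \<and> \<alpha> \<noteq> \<beta> \<longrightarrow> T \<beta> \<subseteq>\<^sup>* T \<alpha>"
  proof (intro allI impI)
    fix \<alpha> \<beta> assume "(\<alpha>, \<beta>) \<in> ?R \<and> \<alpha> \<noteq> \<beta>"
    then have "\<beta> \<in> underS r j" "\<alpha> \<in> underS r \<beta>" by (auto simp: underS_def)
    then show "T \<beta> \<subseteq>\<^sup>* T \<alpha>" using dec by blast
  qed
  show ?thesis
    using below_t_pseudo_intersection[OF Well_order_Restr[OF W] bt_R inf_R dec_R] unfolding FR .
qed

lemma below_t_meets_open_dense: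
  fixes D :: "'i \<Rightarrow> nat set \<Rightarrow> bool"
  assumes W: "Well_order r" and bt: "below_t r"
    and dense: "\<And>j P. j \<in> Field r \<Longrightarrow> infinite P \<Longrightarrow> \<exists>Q\<subseteq>P. infinite Q \<and> D j Q"
    and almost_sub_closed: "\<And>j Q Z. D j Q \<Longrightarrow> Z \<subseteq>\<^sup>* Q \<Longrightarrow> D j Z"
  shows "\<exists>Y. infinite Y \<and> (\<forall>j\<in>Field r. D j Y)"
proof -
  interpret wo_rel r using W by (simp add: wo_rel_def)
  define F where "F g j = (SOME Q. infinite Q \<and> D j Q \<and> (\<forall>i\<in>underS j. Q \<subseteq>\<^sup>* g i))"
    for g :: "'i \<Rightarrow> nat set" and j
  define T where "T = worec F"
  have "adm_wo F"
    unfolding adm_wo_def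
  proof (intro allI impI)
    fix f g :: "'i \<Rightarrow> nat set" and j assume "\<forall>i\<in>underS j. f i = g i"
    then have "(\<forall>i\<in>underS j. Q \<subseteq>\<^sup>* f i) = (\<forall>i\<in>underS j. Q \<subseteq>\<^sup>* g i)" for Q by auto
    then show "F f j = F g j" unfolding F_def by presburger
  qed
  then have T_eq: "T j = F T j" for j
    unfolding T_def by (rule fun_cong[OF worec_fixpoint])
  have tower: "infinite (T j) \<and> D j (T j) \<and> (\<forall>i\<in>underS j. T j \<subseteq>\<^sup>* T i)"
    if "j \<in> Field r" for j
    using that
  proof (induction j rule: well_order_induct)
    case (1 j)
    have IH: "infinite (T i) \<and> D i (T i) \<and> (\<forall>k\<in>underS i. T i \<subseteq>\<^sup>* T k)"
      if "i \<in> underS j" for i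
      using 1 that by (auto simp: underS_def intro: FieldI1)
    then have "\<exists>P. infinite P \<and> (\<forall>i\<in>underS j. P \<subseteq>\<^sup>* T i)"
      by (intro below_t_underS_pseudo_intersection[OF W bt]) simp_all
    then obtain P where P: "infinite P" "\<forall>i\<in>underS j. P \<subseteq>\<^sup>* T i" by blast
    obtain Q where Q: "Q \<subseteq> P" "infinite Q" "D j Q"
      using dense[OF 1(2) P(1)] by blast
    then have "\<forall>i\<in>underS j. Q \<subseteq>\<^sup>* T i"
      using P(2) almost_sub_trans[OF subset_imp_almost_sub] by blast
    then have "\<exists>Q. infinite Q \<and> D j Q \<and> (\<forall>i\<in>underS j. Q \<subseteq>\<^sup>* T i)" using Q by blast
    then show ?case unfolding T_eq[of j] F_def by (rule someI_ex)
  qed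
  have "\<forall>\<alpha> \<beta>. (\<alpha>, \<beta>) \<in> r \<and> \<alpha> \<noteq> \<beta> \<longrightarrow> T \<beta> \<subseteq>\<^sup>* T \<alpha>"
    using tower by (metis FieldI2 underS_I)
  then have "\<exists>Y. infinite Y \<and> (\<forall>j\<in>Field r. Y \<subseteq>\<^sup>* T j)"
    using below_t_pseudo_intersection[OF W bt] tower by blast
  then show ?thesis using tower almost_sub_closed by blast
qed

definition overshoot :: "(nat \<Rightarrow> nat) \<Rightarrow> nat set \<Rightarrow> nat set" where
  "overshoot h Y = {y\<in>Y. \<exists>z\<in>Y. y < z \<and> z \<le> h y}"

lemma finite_overshoot_almost_sub:
  assumes "finite (overshoot h Y)" and "Z \<subseteq>\<^sup>* Y"
  shows "finite (overshoot h Z)"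
proof (rule finite_subset)
  show "overshoot h Z \<subseteq> (Z - Y) \<union> overshoot h Y \<union> (\<Union>z\<in>Z - Y. {..<z})"
    unfolding overshoot_def by auto
  show "finite ((Z - Y) \<union> overshoot h Y \<union> (\<Union>z\<in>Z - Y. {..<z}))"
    using assms unfolding almost_sub_def by simp
qed

lemma infinite_subset_without_overshoot:
  assumes "infinite P"
  shows "\<exists>Q\<subseteq>P. infinite Q \<and> overshoot h Q = {}"
proof -
  have above: "\<exists>y. y \<in> P \<and> m < y" for m
    using assms by (auto simp: infinite_nat_iff_unbounded)
  obtain q where q: "\<And>n. q n \<in> P \<and> max (q n) (h (q n)) < q (Suc n)"
    using dependent_nat_choice[of "\<lambda>_ x. x \<in> P" "\<lambda>_ x y. max x (h x) < y"] above by blast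
  then have mono: "strict_mono q" by (simp add: strict_mono_Suc_iff)
  have "h (q m) < q n" if "m < n" for m n
  proof -
    have "q (Suc m) \<le> q n" using mono that by (simp add: strict_mono_less_eq Suc_leI)
    moreover have "h (q m) < q (Suc m)" using q[of m] by simp
    ultimately show ?thesis by simp
  qed
  then have "overshoot h (range q) = {}"
    unfolding overshoot_def using mono by (auto simp: strict_mono_less not_le)
  moreover have "infinite (range q)"
    using mono by (simp add: range_inj_infinite strict_mono_imp_inj_on)
  moreover have "range q \<subseteq> P" using q by auto
  ultimately show ?thesis by (intro exI[of _ "range q"] conjI)
qed

text \<open>The union, over consecutive elements \<open>y < y'\<close> of \<open>Y\<close>, of \<open>B y \<inter> {y..<y'}\<close>.\<close>

definition staircase :: "(nat \<Rightarrow> nat set) \<Rightarrow> nat set \<Rightarrow> nat set" where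
  "staircase B Y = {x. \<exists>y\<in>Y. y \<le> x \<and> x \<in> B y \<and> (\<forall>z\<in>Y. y < z \<longrightarrow> x < z)}"

lemma staircase_almost_sub:
  assumes "antimono B" and "infinite Y"
  shows "staircase B Y \<subseteq>\<^sup>* B n"
proof -
  obtain z where z: "z \<in> Y" "n < z"
    using assms(2) by (auto simp: infinite_nat_iff_unbounded)
  have "staircase B Y - B n \<subseteq> {..<z}"
  proof
    fix x assume "x \<in> staircase B Y - B n"
    then obtain y where y: "y \<in> Y" "x \<in> B y" "\<forall>z\<in>Y. y < z \<longrightarrow> x < z" "x \<notin> B n"
      unfolding staircase_def by blast
    have "\<not> n \<le> y" using y(2,4) antimonoD[OF assms(1)] by blast
    then show "x \<in> {..<z}" using y(3) z by auto
  qed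
  then show ?thesis unfolding almost_sub_def by (rule finite_subset) simp
qed

lemma infinite_Int_staircase:
  assumes "infinite Y" and "finite (overshoot h Y)"
    and h: "\<And>y. h y \<in> S \<inter> B y \<and> y \<le> h y"
  shows "infinite (S \<inter> staircase B Y)"
  unfolding infinite_nat_iff_unbounded_le
proof
  fix m
  have "infinite (Y - overshoot h Y)" using assms(1,2) by (rule Diff_infinite_finite[rotated])
  then obtain y where y: "y \<in> Y" "y \<notin> overshoot h Y" "m \<le> y"
    by (auto simp: infinite_nat_iff_unbounded_le)
  then have "h y \<in> S \<inter> staircase B Y"
    using h[of y] unfolding staircase_def overshoot_def by (auto simp: not_le)
  moreover have "m \<le> h y" using h[of y] y(3) by linarith
  ultimately show "\<exists>x\<ge>m. x \<in> S \<inter> staircase B Y" by blast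
qed

lemma almost_decreasing_pseudo_intersection_meeting:
  fixes B :: "nat \<Rightarrow> nat set" and S :: "'j \<Rightarrow> nat set"
  assumes dec: "\<forall>n m. n < m \<longrightarrow> B m \<subseteq>\<^sup>* B n"
    and meet: "\<And>j n. j \<in> J \<Longrightarrow> infinite (S j \<inter> B n)"
    and sparse: "\<And>h. \<exists>Y. infinite Y \<and> (\<forall>j\<in>J. finite (overshoot (h j) Y))"
  shows "\<exists>C. (\<forall>n. C \<subseteq>\<^sup>* B n) \<and> (\<forall>j\<in>J. infinite (S j \<inter> C))"
proof -
  define B' where "B' n = (\<Inter>m\<le>n. B m)" for n
  have "antimono B'" unfolding B'_def by (rule antimonoI) auto
  have B_B': "B n \<subseteq>\<^sup>* B' n" for n
  proof -
    have "B n - B' n \<subseteq> (\<Union>m<n. B n - B m)" unfolding B'_def by (auto simp: le_less)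
    moreover have "finite (\<Union>m<n. B n - B m)"
      using dec unfolding almost_sub_def by (intro finite_UN_I) auto
    ultimately show ?thesis unfolding almost_sub_def by (rule finite_subset)
  qed
  define h where "h j y = (SOME x. x \<in> S j \<inter> B' y \<and> y \<le> x)" for j y
  have h: "h j y \<in> S j \<inter> B' y \<and> y \<le> h j y" if "j \<in> J" for j y
  proof -
    have "S j \<inter> B y \<subseteq> (S j \<inter> B' y) \<union> (B y - B' y)" by blast
    then have "infinite (S j \<inter> B' y)"
      using meet[OF that, of y] B_B'[of y] unfolding almost_sub_def by (meson finite_Un finite_subset)
    then have "\<exists>x. x \<in> S j \<inter> B' y \<and> y \<le> x" by (auto simp: infinite_nat_iff_unbounded_le)
    then show ?thesis unfolding h_def by (rule someI_ex)
  qed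
  obtain Y where Y: "infinite Y" "\<forall>j\<in>J. finite (overshoot (h j) Y)" using sparse by blast
  show ?thesis
  proof (intro exI conjI allI ballI)
    show "staircase B' Y \<subseteq>\<^sup>* B n" for n
      by (rule almost_sub_trans[OF staircase_almost_sub[OF \<open>antimono B'\<close> Y(1)] subset_imp_almost_sub])
        (auto simp: B'_def)
    show "infinite (S j \<inter> staircase B' Y)" if "j \<in> J" for j
      using infinite_Int_staircase[OF Y(1)] Y(2) h that by blast
  qed
qed

lemma almost_decreasing_pseudo_intersection:
  fixes B :: "nat \<Rightarrow> nat set"
  assumes "\<forall>n m. n < m \<longrightarrow> B m \<subseteq>\<^sup>* B n" and "\<forall>n. infinite (B n)"
  shows "\<exists>X. infinite X \<and> (\<forall>n. X \<subseteq>\<^sup>* B n)"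
proof -
  have "\<exists>Y. infinite Y \<and> (\<forall>j\<in>{()}. finite (overshoot (h j) Y))" for h :: "unit \<Rightarrow> nat \<Rightarrow> nat"
    using infinite_subset_without_overshoot[OF infinite_UNIV_nat, of "h ()"] by auto
  then show ?thesis
    using almost_decreasing_pseudo_intersection_meeting[OF assms(1), of "{()}" "\<lambda>_. UNIV"] assms(2)
    by auto
qed

lemma below_t_finite_overshoot:
  fixes h :: "'i \<Rightarrow> nat \<Rightarrow> nat"
  assumes "Well_order r" and "below_t r"
  shows "\<exists>Y. infinite Y \<and> (\<forall>j\<in>Field r. finite (overshoot (h j) Y))"
proof (rule below_t_meets_open_dense[OF assms])
  show "\<exists>Q\<subseteq>P. infinite Q \<and> finite (overshoot (h j) Q)" if "infinite P" for j P
    using infinite_subset_without_overshoot[OF that] by (metis finite.emptyI)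
qed (rule finite_overshoot_almost_sub)

theorem lemma2p4:
  fixes r :: "'i rel" and A :: "'i \<Rightarrow> nat set" and B :: "nat \<Rightarrow> nat set"
  assumes "Well_order r"
    and "below_t r"
    and "\<forall>i\<in>Field r. infinite (A i)"
    and "\<forall>n. infinite (B n)"
    and "\<forall>n m. n < m \<longrightarrow> B m \<subseteq>\<^sup>* B n"
    and "\<forall>i\<in>Field r. \<forall>n. infinite (A i \<inter> B n)"
    and "\<forall>i j. (i, j) \<in> r \<and> i \<noteq> j \<longrightarrow> (\<exists>n. A j \<inter> B n \<subseteq>\<^sup>* A i \<inter> B n)"
  shows "\<exists>X. infinite X \<and> (\<forall>i\<in>Field r. X \<subseteq>\<^sup>* A i) \<and> (\<forall>n. X \<subseteq>\<^sup>* B n)"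
proof (cases "Field r = {}")
  case True
  then show ?thesis using almost_decreasing_pseudo_intersection[OF assms(5,4)] by simp
next
  case False
  then obtain j0 where j0: "j0 \<in> Field r" by blast
  have meet: "\<And>j n. j \<in> Field r \<Longrightarrow> infinite (A j \<inter> B n)" using assms(6) by blast
  obtain C where C: "\<forall>n. C \<subseteq>\<^sup>* B n" "\<forall>j\<in>Field r. infinite (A j \<inter> C)"
    using almost_decreasing_pseudo_intersection_meeting[where J = "Field r" and S = A,
        OF assms(5) meet below_t_finite_overshoot[OF assms(1,2)]]
    by blast
  have "\<forall>i j. (i, j) \<in> r \<and> i \<noteq> j \<longrightarrow> A j \<inter> C \<subseteq>\<^sup>* A i \<inter> C"
    using assms(7) almost_sub_Int_transfer[OF _ C(1)] by blast
  then obtain X where X: "infinite X" "\<forall>j\<in>Field r. X \<subseteq>\<^sup>* A j \<inter> C"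
    using below_t_pseudo_intersection[OF assms(1,2) C(2)] by blast
  have XC: "X \<subseteq>\<^sup>* C" using X(2) j0 almost_sub_Int_iff by blast
  show ?thesis
  proof (intro exI conjI ballI allI)
    show "infinite X" by (fact X(1))
    show "X \<subseteq>\<^sup>* A i" if "i \<in> Field r" for i using X(2) that by (simp add: almost_sub_Int_iff)
    show "X \<subseteq>\<^sup>* B n" for n using almost_sub_trans[OF XC C(1)[rule_format]] .
  qed
qed

end
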